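(* Let $y_1,\dots,y_n\in\mathbb{C}^m$ be given vectors, not all zero, and let $\mathcal{T}$ denote the set of $m\times m$ Hermitian Toeplitz matrices (more generally, $\mathcal{T}$ may be any closed cone of Hermitian $m\times m$ matrices). Consider $$(P_1):\quad \min_{R\in\mathcal{T},\,R\succ 0}\ \frac1n\sum_{i=1}^n y_i^H R^{-1}y_i+\log\det R,$$ $$(P_2):\quad \min_{X\in\mathcal{T},\,X\succ 0}\ \log\det X\quad\text{subject to}\quad \frac1n\sum_{i=1}^n y_i^H X^{-1}y_i\le 1.$$ Then the two problems are equivalent in the following sense: if $X^*$ is a minimizer of $(P_2)$, then $R^*=X^*/m$ is a minimizer of $(P_1)$; and conversely, if $R^*$ is a minimizer of $(P_1)$, then $mR^*$ is a minimizer of $(P_2)$.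
   Context: $R\succ 0$ means $R$ is Hermitian positive definite; $\det$ denotes the determinant and $y^H$ the conjugate transpose. *)

theory Defs
  imports "HOL-Analysis.Analysis"
begin

text \<open>Complex m x m matrices are rendered as complex^'m^'m, with m = CARD('m).\<close>

definition conj_transpose :: "complex^'m^'n \<Rightarrow> complex^'n^'m" where
  "conj_transpose A = (\<chi> i j. cnj (A $ j $ i))"

definition hermitian :: "complex^'m^'m \<Rightarrow> bool" where
  "hermitian A \<longleftrightarrow> conj_transpose A = A"

definition qform :: "complex^'m \<Rightarrow> complex^'m^'m \<Rightarrow> complex" where
  "qform x A = (\<Sum>i\<in>UNIV. \<Sum>j\<in>UNIV. cnj (x $ i) * A $ i $ j * x $ j)"

definition pos_def :: "complex^'m^'m \<Rightarrow> bool" where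
  "pos_def A \<longleftrightarrow> hermitian A \<and>
     (\<forall>x. x \<noteq> 0 \<longrightarrow> Im (qform x A) = 0 \<and> Re (qform x A) > 0)"

text \<open>Objective of (P1): (1/n) sum_i y_i^H R^{-1} y_i + log det R.
  For R \<succ> 0 these quantities are real; we take real parts.\<close>
definition P1_obj :: "nat \<Rightarrow> (nat \<Rightarrow> complex^'m) \<Rightarrow> complex^'m^'m \<Rightarrow> real" where
  "P1_obj n y R = (1 / real n) * (\<Sum>i<n. Re (qform (y i) (matrix_inv R))) + ln (Re (det R))"

definition P2_con :: "nat \<Rightarrow> (nat \<Rightarrow> complex^'m) \<Rightarrow> complex^'m^'m \<Rightarrow> real" where
  "P2_con n y X = (1 / real n) * (\<Sum>i<n. Re (qform (y i) (matrix_inv X)))"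

definition P2_obj :: "complex^'m^'m \<Rightarrow> real" where
  "P2_obj X = ln (Re (det X))"

definition is_min_P1 :: "(complex^'m^'m) set \<Rightarrow> nat \<Rightarrow> (nat \<Rightarrow> complex^'m) \<Rightarrow> complex^'m^'m \<Rightarrow> bool" where
  "is_min_P1 T n y R \<longleftrightarrow> R \<in> T \<and> pos_def R \<and>
     (\<forall>R'\<in>T. pos_def R' \<longrightarrow> P1_obj n y R \<le> P1_obj n y R')"

definition is_min_P2 :: "(complex^'m^'m) set \<Rightarrow> nat \<Rightarrow> (nat \<Rightarrow> complex^'m) \<Rightarrow> complex^'m^'m \<Rightarrow> bool" where
  "is_min_P2 T n y X \<longleftrightarrow> X \<in> T \<and> pos_def X \<and> P2_con n y X \<le> 1 \<and>
     (\<forall>X'\<in>T. pos_def X' \<longrightarrow> P2_con n y X' \<le> 1 \<longrightarrow> P2_obj X \<le> P2_obj X')"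

end

theory Submission
  imports Defs
begin

text \<open>Restrict both problems to a ray \<open>s R\<close>, \<open>s > 0\<close>, which stays in the cone. Writing
  \<open>c = P2_con R\<close>, \<open>L = log det R\<close> and \<open>m\<close> for the dimension, the objective of (P1) along the ray is
  \<open>c/s + m log s + L\<close>, minimised exactly at \<open>s = c/m\<close>, where it equals
  \<open>m - m log m + log det (c R)\<close>; and \<open>c R\<close> is the point of the ray where the constraint of (P2)
  is active. Hence minimising (P1) over the cone amounts to minimising \<open>log det\<close> over the
  constraint boundary, which is where a minimiser of (P2) lies, and the two minimisers differ by
  the factor \<open>m\<close>.\<close>

lemma complex_scaleR_conv_of_real: "c *\<^sub>R (z::complex) = of_real c * z"
  by (fact scaleR_conv_of_real)

lemma qform_scaleR: "qform x (c *\<^sub>R A) = of_real c * qform x A"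
  unfolding qform_def by (simp add: sum_distrib_left complex_scaleR_conv_of_real algebra_simps)

lemma qform_add: "qform x (A + B) = qform x A + qform x B"
  unfolding qform_def by (simp add: algebra_simps sum.distrib)

lemma qform_conv_matrix_vector_mult: "qform x A = (\<Sum>i\<in>UNIV. cnj (x $ i) * (A *v x) $ i)"
  unfolding qform_def matrix_vector_mult_def by (simp add: sum_distrib_left mult.assoc)

lemma qform_mat_1: "qform x (mat 1) = (\<Sum>i\<in>UNIV. of_real ((cmod (x $ i))\<^sup>2))"
proof -
  have "(\<Sum>j\<in>UNIV. cnj (x $ i) * (mat 1 :: complex^'a^'a) $ i $ j * x $ j)
      = of_real ((cmod (x $ i))\<^sup>2)" for i
  proof -
    have "(\<Sum>j\<in>UNIV. cnj (x $ i) * (mat 1 :: complex^'a^'a) $ i $ j * x $ j)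
        = (\<Sum>j\<in>UNIV. if j = i then cnj (x $ i) * x $ i else 0)"
      by (rule sum.cong) (auto simp: mat_def)
    also have "\<dots> = cnj (x $ i) * x $ i" by simp
    also have "\<dots> = of_real ((cmod (x $ i))\<^sup>2)"
      by (metis complex_norm_square mult.commute of_real_power)
    finally show ?thesis .
  qed
  thus ?thesis unfolding qform_def by simp
qed

lemma hermitian_iff: "hermitian A \<longleftrightarrow> (\<forall>i j. cnj (A $ j $ i) = A $ i $ j)"
  unfolding hermitian_def conj_transpose_def vec_eq_iff by auto

lemma pos_def_mat_1: "pos_def (mat 1)"
  unfolding pos_def_def
proof (intro conjI allI impI; (elim conjE)?)
  show "hermitian (mat 1 :: complex^'a^'a)"
    unfolding hermitian_iff by (simp add: mat_def)
  fix x :: "complex^'a" assume "x \<noteq> 0"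
  then obtain i where "x $ i \<noteq> 0" by (auto simp: vec_eq_iff)
  hence "(\<Sum>i\<in>UNIV. (cmod (x $ i))\<^sup>2) > 0"
    by (intro sum_pos2[of UNIV i]) auto
  thus "Im (qform x (mat 1)) = 0" "Re (qform x (mat 1)) > 0"
    unfolding qform_mat_1 by (simp_all add: Re_sum Im_sum)
qed

lemma pos_def_scaleR: "pos_def A \<Longrightarrow> c > 0 \<Longrightarrow> pos_def (c *\<^sub>R A)"
  unfolding pos_def_def by (auto simp: hermitian_iff qform_scaleR complex_scaleR_conv_of_real)

lemma pos_def_add: "pos_def A \<Longrightarrow> pos_def B \<Longrightarrow> pos_def (A + B)"
  unfolding pos_def_def by (auto simp: hermitian_iff qform_add add_pos_pos)

lemma pos_def_segment_mat_1:
  assumes "pos_def A" "0 \<le> t" "t \<le> 1"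
  shows "pos_def ((1 - t) *\<^sub>R mat 1 + t *\<^sub>R A)"
  using assms pos_def_add[OF pos_def_scaleR[OF pos_def_mat_1] pos_def_scaleR[OF assms(1)]]
  by (cases "t = 0"; cases "t = 1") (auto simp: pos_def_mat_1)

lemma det_scaleR: "det (c *\<^sub>R (A::complex^'n^'n)) = of_real c ^ CARD('n) * det A"
  unfolding det_def
  by (simp add: complex_scaleR_conv_of_real prod.distrib sum_distrib_left algebra_simps)

lemma hermitian_det_real:
  assumes "hermitian (A::complex^'n^'n)" shows "Im (det A) = 0"
proof -
  have cnj_det: "det ((\<chi> i j. cnj (A $ i $ j)) :: complex^'n^'n) = cnj (det A)"
    unfolding det_def by (simp add: cnj_sum cnj_prod)
  have "A = transpose ((\<chi> i j. cnj (A $ i $ j)) :: complex^'n^'n)"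
    using assms unfolding hermitian_def conj_transpose_def transpose_def by simp
  hence "det A = cnj (det A)"
    by (metis det_transpose cnj_det)
  hence "Im (det A) = Im (cnj (det A))" by simp
  thus ?thesis by simp
qed

lemma pos_def_invertible:
  assumes "pos_def (A::complex^'n^'n)" shows "invertible A"
proof -
  have "x = 0" if "A *v x = 0" for x
  proof (rule ccontr)
    assume "x \<noteq> 0"
    hence "Re (qform x A) > 0" using assms unfolding pos_def_def by auto
    moreover have "qform x A = 0" unfolding qform_conv_matrix_vector_mult that by simp
    ultimately show False by simp
  qed
  thus ?thesis unfolding invertible_left_inverse matrix_left_invertible_ker by blast
qed

text \<open>A positive definite matrix is joined to the identity by a segment of invertible matrices
  with real determinant, so the determinant cannot change sign along it.\<close>
lemma pos_def_det_pos:
  assumes "pos_def (A::complex^'n^'n)" shows "Re (det A) > 0"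
proof (rule ccontr)
  let ?S = "\<lambda>t. (1 - t) *\<^sub>R mat 1 + t *\<^sub>R A"
  have cont: "continuous_on UNIV (\<lambda>t. Re (det (?S t)))"
    unfolding det_def by (simp add: complex_scaleR_conv_of_real) (intro continuous_intros)
  assume "\<not> Re (det A) > 0"
  then obtain t where t: "0 \<le> t" "t \<le> 1" "Re (det (?S t)) = 0"
    using IVT2[of "\<lambda>t. Re (det (?S t))" 1 0 0] cont
    by (auto simp: continuous_on_eq_continuous_at)
  have pd: "pos_def (?S t)" using pos_def_segment_mat_1[OF assms t(1,2)] .
  hence "Im (det (?S t)) = 0"
    using hermitian_det_real unfolding pos_def_def by blast
  with t(3) have "det (?S t) = 0" by (simp add: complex_eq_iff)
  with pos_def_invertible[OF pd] show False using invertible_det_nz by blast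
qed

lemma matrix_inv_inverse:
  assumes "invertible A"
  shows matrix_inv_right: "A ** matrix_inv A = mat 1"
    and matrix_inv_left: "matrix_inv A ** A = mat 1"
  using someI_ex[OF assms[unfolded invertible_def]] unfolding matrix_inv_def by auto

lemma matrix_inv_eqI:
  fixes A B :: "'a::comm_ring_1^'n^'n"
  assumes "A ** B = mat 1" "B ** A = mat 1"
  shows "matrix_inv A = B"
proof -
  have inv: "invertible A" unfolding invertible_def using assms by blast
  have "matrix_inv A = matrix_inv A ** (A ** B)" using assms(1) by (simp add: matrix_mul_rid)
  also have "\<dots> = B" by (simp add: matrix_mul_assoc matrix_inv_left[OF inv] matrix_mul_lid)
  finally show ?thesis .
qed

lemma scaleR_matrix_mult_scaleR:
  "(a *\<^sub>R (A::complex^'n^'n)) ** (b *\<^sub>R B) = (a * b) *\<^sub>R (A ** B)"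
  by (simp add: matrix_matrix_mult_def vec_eq_iff complex_scaleR_conv_of_real sum_distrib_left
      algebra_simps)

lemma matrix_inv_scaleR:
  assumes "invertible (A::complex^'n^'n)" "c \<noteq> 0"
  shows "matrix_inv (c *\<^sub>R A) = (1 / c) *\<^sub>R matrix_inv A"
  using assms by (intro matrix_inv_eqI)
    (simp_all add: scaleR_matrix_mult_scaleR matrix_inv_left matrix_inv_right)

lemma qform_matrix_inv_pos:
  assumes "pos_def (R::complex^'n^'n)" "v \<noteq> 0"
  shows "Re (qform v (matrix_inv R)) > 0"
proof -
  have inv: "invertible R" using pos_def_invertible[OF assms(1)] .
  define z where "z = matrix_inv R *v v"
  have Rz: "R *v z = v"
    unfolding z_def by (simp add: matrix_vector_mul_assoc matrix_inv_right[OF inv])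
  have "qform z R = cnj (qform v (matrix_inv R))"
    unfolding qform_conv_matrix_vector_mult Rz z_def[symmetric]
    by (simp add: cnj_sum mult.commute)
  hence "Re (qform v (matrix_inv R)) = Re (qform z R)" by simp
  moreover have "z \<noteq> 0" using Rz assms(2) by auto
  ultimately show ?thesis using assms(1) unfolding pos_def_def by simp
qed

lemma qform_zero: "qform 0 A = 0"
  by (simp add: qform_def)

lemma P2_con_pos:
  assumes "\<exists>i<n. y i \<noteq> 0" "pos_def R" shows "P2_con n y R > 0"
proof -
  from assms(1) obtain k where k: "k < n" "y k \<noteq> 0" by auto
  have "(\<Sum>i<n. Re (qform (y i) (matrix_inv R))) > 0"
  proof (rule sum_pos2[of _ k])
    fix i show "0 \<le> Re (qform (y i) (matrix_inv R))"
      using qform_matrix_inv_pos[OF assms(2), of "y i"] by (cases "y i = 0") (auto simp: qform_zero)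
  qed (use k qform_matrix_inv_pos[OF assms(2)] in auto)
  with k show ?thesis unfolding P2_con_def by simp
qed

lemma P2_con_scaleR:
  assumes "pos_def R" "c > 0" shows "P2_con n y (c *\<^sub>R R) = P2_con n y R / c"
  using assms matrix_inv_scaleR[OF pos_def_invertible[OF assms(1)], of c]
  unfolding P2_con_def by (simp add: qform_scaleR sum_divide_distrib mult.commute)

lemma P2_obj_scaleR:
  assumes "pos_def (R::complex^'m^'m)" "c > 0"
  shows "P2_obj (c *\<^sub>R R) = real CARD('m) * ln c + P2_obj R"
proof -
  have "Re (det (c *\<^sub>R R)) = c ^ CARD('m) * Re (det R)"
    unfolding det_scaleR by (simp flip: of_real_power)
  thus ?thesis unfolding P2_obj_def using pos_def_det_pos[OF assms(1)] assms(2)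
    by (simp add: ln_mult ln_realpow)
qed

lemma P1_obj_eq: "P1_obj n y R = P2_con n y R + P2_obj R"
  unfolding P1_obj_def P2_con_def P2_obj_def by simp

lemma P1_obj_scaleR:
  assumes "pos_def (R::complex^'m^'m)" "s > 0"
  shows "P1_obj n y (s *\<^sub>R R) = P2_con n y R / s + real CARD('m) * ln s + P2_obj R"
  unfolding P1_obj_eq P2_con_scaleR[OF assms] P2_obj_scaleR[OF assms] by simp

lemma ln_diff_le:
  fixes a b :: real
  assumes "0 < a" "0 < b" shows "b * (ln a - ln b) \<le> a - b"
proof -
  have "b * ln (a / b) \<le> b * (a / b - 1)"
    using assms by (intro mult_left_mono ln_le_minus_one) auto
  thus ?thesis using assms by (simp add: ln_div algebra_simps)
qed

lemma ln_diff_eq_imp_eq: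
  fixes a b :: real
  assumes "0 < a" "0 < b" "a - b \<le> b * (ln a - ln b)" shows "a = b"
proof -
  have "a / b - 1 \<le> ln (a / b)"
    using assms by (simp add: ln_div field_simps)
  hence "ln (a / b) = a / b - 1" using ln_le_minus_one[of "a / b"] assms by simp
  hence "a / b = 1" using ln_eq_minus_one[of "a / b"] assms by simp
  thus ?thesis using assms by simp
qed

lemma cone_scaleR: "cone T \<Longrightarrow> R \<in> T \<Longrightarrow> c > 0 \<Longrightarrow> c *\<^sub>R R \<in> T"
  unfolding cone_def by auto

lemma is_min_P2_constraint_active:
  fixes X :: "complex^'m^'m"
  assumes "\<exists>i<n. y i \<noteq> 0" "cone T" "is_min_P2 T n y X"
  shows "P2_con n y X = 1"
proof (rule ccontr)
  let ?a = "P2_con n y X"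
  have X: "X \<in> T" "pos_def X" "P2_con n y X \<le> 1" using assms(3) unfolding is_min_P2_def by auto
  have a0: "?a > 0" using P2_con_pos[OF assms(1) X(2)] .
  assume "?a \<noteq> 1"
  with X(3) have "ln ?a < 0" using a0 by simp
  moreover have "P2_obj X \<le> P2_obj (?a *\<^sub>R X)"
    using assms(3) cone_scaleR[OF assms(2) X(1) a0] pos_def_scaleR[OF X(2) a0]
      P2_con_scaleR[OF X(2) a0] a0
    unfolding is_min_P2_def by auto
  ultimately show False
    unfolding P2_obj_scaleR[OF X(2) a0] using mult_pos_neg[of "real CARD('m)" "ln ?a"] by simp
qed

lemma is_min_P2_imp_is_min_P1:
  fixes X :: "complex^'m^'m"
  assumes y: "\<exists>i<n. y i \<noteq> 0" and T: "cone T" and min: "is_min_P2 T n y X"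
  shows "is_min_P1 T n y ((1 / real CARD('m)) *\<^sub>R X)"
proof -
  define m where "m = real CARD('m)"
  have m0: "0 < m" "0 < 1 / m" unfolding m_def by simp_all
  have X: "X \<in> T" "pos_def X" and con: "P2_con n y X = 1"
    using min is_min_P2_constraint_active[OF y T min] unfolding is_min_P2_def by auto
  have "P1_obj n y ((1 / m) *\<^sub>R X) \<le> P1_obj n y R" if R: "R \<in> T" "pos_def R" for R
  proof -
    define c where "c = P2_con n y R"
    have c0: "c > 0" unfolding c_def using P2_con_pos[OF y R(2)] .
    have "P2_obj X \<le> P2_obj (c *\<^sub>R R)"
      using min cone_scaleR[OF T R(1) c0] pos_def_scaleR[OF R(2) c0] P2_con_scaleR[OF R(2) c0] c0
      unfolding is_min_P2_def c_def by auto
    hence "P2_obj X \<le> m * ln c + P2_obj R" unfolding P2_obj_scaleR[OF R(2) c0] m_def .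
    moreover have "m * (ln c - ln m) \<le> c - m" using ln_diff_le[OF c0 m0(1)] .
    moreover have "P1_obj n y ((1 / m) *\<^sub>R X) = m - m * ln m + P2_obj X"
      using P1_obj_scaleR[OF X(2) m0(2), of n y] con m0 by (simp add: m_def ln_div)
    ultimately show ?thesis unfolding P1_obj_eq[of n y R] c_def[symmetric] by argo
  qed
  thus ?thesis unfolding is_min_P1_def m_def[symmetric]
    using cone_scaleR[OF T X(1) m0(2)] pos_def_scaleR[OF X(2) m0(2)] by blast
qed

lemma is_min_P1_P2_con:
  fixes R :: "complex^'m^'m"
  assumes y: "\<exists>i<n. y i \<noteq> 0" and T: "cone T" and min: "is_min_P1 T n y R"
  shows "P2_con n y R = real CARD('m)"
proof -
  define m where "m = real CARD('m)"
  define c where "c = P2_con n y R"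
  have R: "R \<in> T" "pos_def R" using min unfolding is_min_P1_def by auto
  have c0: "c > 0" unfolding c_def using P2_con_pos[OF y R(2)] .
  have s0: "c / m > 0" using c0 by (simp add: m_def)
  have "P1_obj n y R \<le> P1_obj n y ((c / m) *\<^sub>R R)"
    using min cone_scaleR[OF T R(1) s0] pos_def_scaleR[OF R(2) s0] unfolding is_min_P1_def by auto
  hence "c - m \<le> m * (ln c - ln m)"
    using P1_obj_scaleR[OF R(2) s0, of n y] P1_obj_eq[of n y R] c0
    by (simp add: c_def m_def ln_div algebra_simps)
  thus ?thesis using ln_diff_eq_imp_eq[OF c0] by (simp add: c_def m_def)
qed

lemma is_min_P1_imp_is_min_P2:
  fixes R :: "complex^'m^'m"
  assumes y: "\<exists>i<n. y i \<noteq> 0" and T: "cone T" and min: "is_min_P1 T n y R"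
  shows "is_min_P2 T n y (real CARD('m) *\<^sub>R R)"
proof -
  define m where "m = real CARD('m)"
  have m0: "0 < m" "0 < 1 / m" unfolding m_def by simp_all
  have R: "R \<in> T" "pos_def R" using min unfolding is_min_P1_def by auto
  have con: "P2_con n y R = m" using is_min_P1_P2_con[OF y T min] by (simp add: m_def)
  have "P2_obj (m *\<^sub>R R) \<le> P2_obj X" if X: "X \<in> T" "pos_def X" "P2_con n y X \<le> 1" for X
  proof -
    have "P1_obj n y R \<le> P1_obj n y ((1 / m) *\<^sub>R X)"
      using min cone_scaleR[OF T X(1) m0(2)] pos_def_scaleR[OF X(2) m0(2)]
      unfolding is_min_P1_def by auto
    also have "\<dots> \<le> m - m * ln m + P2_obj X"
      unfolding P1_obj_scaleR[OF X(2) m0(2)] m_def[symmetric]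
      using X(3) m0 by (simp add: ln_div)
    finally show ?thesis
      unfolding P1_obj_eq P2_obj_scaleR[OF R(2) m0(1)] con m_def[symmetric] by simp
  qed
  moreover have "P2_con n y (m *\<^sub>R R) \<le> 1" using m0 by (simp add: P2_con_scaleR[OF R(2)] con)
  ultimately show ?thesis unfolding is_min_P2_def m_def[symmetric]
    using cone_scaleR[OF T R(1) m0(1)] pos_def_scaleR[OF R(2) m0(1)] by blast
qed

theorem lemma1:
  fixes T :: "(complex^'m^'m) set" and n :: nat and y :: "nat \<Rightarrow> complex^'m"
  assumes not_all_zero: "\<exists>i<n. y i \<noteq> 0"
    and T_closed: "closed T"
    and T_cone: "cone T"
    and T_herm: "\<forall>A\<in>T. hermitian A"
  shows "(\<forall>X. is_min_P2 T n y X \<longrightarrow> is_min_P1 T n y ((1 / real CARD('m)) *\<^sub>R X))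
       \<and> (\<forall>R. is_min_P1 T n y R \<longrightarrow> is_min_P2 T n y (real CARD('m) *\<^sub>R R))"
  using is_min_P2_imp_is_min_P1[OF not_all_zero T_cone]
    is_min_P1_imp_is_min_P2[OF not_all_zero T_cone] by blast

end
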